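(* Consider the deterministic tandem system TSC(RO) described in the context, with $n$ jobs, satisfying for some constants $\lambda>0$, $\mu_1,\dots,\mu_J>0$, $\Gamma_a,\Gamma_{s,1},\dots,\Gamma_{s,J}\ge 0$: $$\Big|\sum_{i=k+1}^{n}U_i-\lambda^{-1}(n-k)\Big|\le \Gamma_a\,\phi(n-k),\qquad k=0,1,\dots,n-1,$$ $$\Big|\sum_{i=k+1}^{n}V^j_i-\mu_j^{-1}(n-k)\Big|\le \Gamma_{s,j}\,\phi(n-k),\qquad k=0,1,\dots,n-1,\ j=1,\dots,J.$$ Let $\Gamma=\max(\Gamma_a,\Gamma_{s,1},\dots,\Gamma_{s,J})$ and assume $\lambda\Gamma\ge e^{2e}$ and $\rho^*:=\lambda/\min_j\mu_j<1$. Then the sojourn time of the $n$-th job satisfies $$W_n\le \frac{7J^2\Gamma^2\lambda}{1-\rho^*}\,\ln\ln\frac{J\lambda\Gamma}{1-\rho^*}+J\lambda^{-1}.$$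
   Context: $\phi(x)=\sqrt{x\ln\ln x}$ for $x\ge e^e$ and $\phi(x)=1$ for $x<e^e$. TSC(RO): servers $S_1,\dots,S_J$ in tandem, initially empty, $n$ jobs. Job $i$ arrives to the buffer of $S_1$ at time $\sum_{l=1}^i U_l$ (nonnegative deterministic interarrival times $U_1,\dots,U_n$, $U_1$ being the arrival time of job 1). Each server processes jobs in FIFO order, is work-conserving, buffers are infinite; job $i$ requires service time $V^j_i\ge 0$ at $S_j$; after service at $S_j$ it joins the buffer of $S_{j+1}$, and after $S_J$ it leaves. The sojourn time $W_n$ of job $n$ is the time between its arrival at $S_1$ and its service completion at $S_J$. *)

theory Defs
  imports Complex_Main
begin

definition phi :: "real \<Rightarrow> real" where
  "phi x = (if x \<ge> exp (exp 1) then sqrt (x * ln (ln x)) else 1)"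

definition arrival :: "(nat \<Rightarrow> real) \<Rightarrow> nat \<Rightarrow> real" where
  "arrival U i = (\<Sum>l=1..i. U l)"

text \<open>dep U V j i: service completion time of job i at server S_j in the tandem
  of FIFO, work-conserving, infinite-buffer servers, initially empty.
  Station 0 is the arrival process; job 0 is a fictitious job (empty system).\<close>
fun dep :: "(nat \<Rightarrow> real) \<Rightarrow> (nat \<Rightarrow> nat \<Rightarrow> real) \<Rightarrow> nat \<Rightarrow> nat \<Rightarrow> real" where
  "dep U V 0 i = arrival U i"
| "dep U V (Suc j) 0 = 0"
| "dep U V (Suc j) (Suc i) = max (dep U V (Suc j) i) (dep U V j (Suc i)) + V (Suc j) (Suc i)"

definition sojourn :: "(nat \<Rightarrow> real) \<Rightarrow> (nat \<Rightarrow> nat \<Rightarrow> real) \<Rightarrow> nat \<Rightarrow> nat \<Rightarrow> real" where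
  "sojourn U V J n = dep U V J n - arrival U n"

end

theory Submission imports Defs begin

(* The theorem splits into a sample-path (queueing) part and an analytic part.
   Queueing part: unfolding the FIFO recursion at one station shows that the
   departure of job i from station j+1 is governed by the job k that started its
   busy period there (lemma dep_busy_period).  Iterating this over the stations
   (lemma dep_path_bound) bounds the sojourn time of job n by
   (n - k + J) r - (n - k)/lambda + (2J+1) e(n - k + 1) for some job k, where
   r bounds all mean service times and e is any monotone error function
   controlling the deviations of the arrival and service tail sums.
   Analytic part: for e = G phi, the error term is absorbed by the negative
   drift (1/lambda - r)(n - k) up to a constant (lemma phi_absorbed), using
   Young's inequality for moderate arguments and the dominance of x over
   K^2 ln ln x for large ones. *)

lemma ln_ge_e:
  fixes x :: real
  assumes "exp (exp 1) \<le> x"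
  shows "exp 1 \<le> ln x" and "1 \<le> ln (ln x)"
proof -
  have "0 < x" using less_le_trans[OF exp_gt_zero assms] .
  then show le: "exp 1 \<le> ln x" using assms by (simp add: ln_ge_iff)
  then show "1 \<le> ln (ln x)" using less_le_trans[OF exp_gt_zero le] by (simp add: ln_ge_iff)
qed

lemma phi_ge_one: "1 \<le> phi x"
proof (cases "exp (exp 1) \<le> x")
  case True
  have "1 \<le> x" using True exp_ge_add_one_self[of "exp 1"] exp_ge_add_one_self[of 1] by linarith
  then have "1 * 1 \<le> x * ln (ln x)" using ln_ge_e(2)[OF True] by (intro mult_mono) auto
  then show ?thesis using True by (simp add: phi_def)
qed (simp add: phi_def)

lemma phi_mono: "mono phi"
proof
  fix x y :: real
  assume xy: "x \<le> y"
  show "phi x \<le> phi y"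
  proof (cases "exp (exp 1) \<le> x")
    case True
    have x0: "0 < x" using less_le_trans[OF exp_gt_zero True] .
    have lnx: "0 < ln x" using less_le_trans[OF exp_gt_zero ln_ge_e(1)[OF True]] .
    have "ln x \<le> ln y" using x0 xy by simp
    then have "ln (ln x) \<le> ln (ln y)" using lnx by simp
    then have "x * ln (ln x) \<le> y * ln (ln y)"
      using x0 xy ln_ge_e(2)[OF True] by (intro mult_mono) auto
    then show ?thesis using True xy by (simp add: phi_def)
  next
    case False
    then show ?thesis using phi_ge_one[of y] by (simp add: phi_def)
  qed
qed

section \<open>Sample-path analysis of the tandem\<close>

lemma dep_zero [simp]: "dep U V j 0 = 0"
  by (cases j) (simp_all add: arrival_def)

lemma arrival_split:
  assumes "k \<le> n"
  shows "arrival U n = arrival U k + (\<Sum>i=k+1..n. U i)"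
proof -
  obtain p where "n = k + p" using assms le_iff_add by blast
  then show ?thesis unfolding arrival_def using sum.ub_add_nat[of 1 k U p] by simp
qed

text \<open>Busy-period decomposition at station j+1: the departure of job i, shifted by
  the remaining work of jobs i+1..n, is dominated by the arrival to station j+1
  of the job k opening the busy period of job i, shifted by the work of jobs k..n.
  The case k = 0 (using natural subtraction, k - 1 = 0) covers a busy period
  starting at time 0.\<close>
lemma dep_busy_period:
  assumes "i \<le> n"
  shows "\<exists>k\<le>i. dep U V (Suc j) i + (\<Sum>l=i+1..n. V (Suc j) l)
                 \<le> dep U V j k + (\<Sum>l=k-1+1..n. V (Suc j) l)"
  using assms
proof (induction i)
  case 0
  show ?case by auto
next
  case (Suc i)
  have work_split: "(\<Sum>l=i+1..n. V (Suc j) l) = V (Suc j) (Suc i) + (\<Sum>l=Suc i+1..n. V (Suc j) l)"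
    using Suc.prems by (simp add: sum.atLeast_Suc_atMost)
  show ?case
  proof (cases "dep U V j (Suc i) \<le> dep U V (Suc j) i")
    case True
    then have "dep U V (Suc j) (Suc i) + (\<Sum>l=Suc i+1..n. V (Suc j) l)
             = dep U V (Suc j) i + (\<Sum>l=i+1..n. V (Suc j) l)"
      using work_split by simp
    moreover obtain k where "k \<le> i"
      "dep U V (Suc j) i + (\<Sum>l=i+1..n. V (Suc j) l) \<le> dep U V j k + (\<Sum>l=k-1+1..n. V (Suc j) l)"
      using Suc by auto
    ultimately show ?thesis by (intro exI[of _ k]) auto
  next
    case False
    then have "dep U V (Suc j) (Suc i) + (\<Sum>l=Suc i+1..n. V (Suc j) l)
             = dep U V j (Suc i) + (\<Sum>l=Suc i-1+1..n. V (Suc j) l)"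
      using work_split by simp
    then show ?thesis by (intro exI[of _ "Suc i"]) simp
  qed
qed

text \<open>Let r bound all mean service times 1/mu j and let the monotone
  function e bound the deviations of the tail sums of interarrival times (from
  below) and of service times (both ways) from their means.  Then the departure of
  job i from station j exceeds the arrival of job n by at most the mean service of
  i - k + j jobs minus the mean interarrival time of n - k jobs, plus 2j+1 error
  terms, for some job k: one error term for the arrivals and two per station.\<close>
lemma dep_path_bound:
  fixes U :: "nat \<Rightarrow> real" and V :: "nat \<Rightarrow> nat \<Rightarrow> real" and mu :: "nat \<Rightarrow> real"
    and e :: "real \<Rightarrow> real"
  assumes e_mono: "mono e" and r: "0 \<le> r"
    and mean: "\<And>j. 1 \<le> j \<Longrightarrow> j \<le> J \<Longrightarrow> 1 / mu j \<le> r"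
    and arr: "\<And>k. k \<le> n \<Longrightarrow>
      (real n - real k) / lam - e (real n - real k) \<le> (\<Sum>i=k+1..n. U i)"
    and srv: "\<And>k j. k \<le> n \<Longrightarrow> 1 \<le> j \<Longrightarrow> j \<le> J \<Longrightarrow>
      \<bar>(\<Sum>i=k+1..n. V j i) - (real n - real k) / mu j\<bar> \<le> e (real n - real k)"
  shows "j \<le> J \<Longrightarrow> i \<le> n \<Longrightarrow> \<exists>k\<le>i. dep U V j i - arrival U n \<le>
     (real i - real k + real j) * r - (real n - real k) / lam + (2 * real j + 1) * e (real n - real k + 1)"
proof (induction j arbitrary: i)
  case 0
  have "dep U V 0 i - arrival U n = - (\<Sum>l=i+1..n. U l)"
    using arrival_split[OF 0(2), of U] by simp
  also have "\<dots> \<le> - (real n - real i) / lam + e (real n - real i + 1)"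
    using arr[OF 0(2)] monoD[OF e_mono, of "real n - real i" "real n - real i + 1"]
    by (simp add: diff_divide_distrib)
  finally show ?case by (intro exI[of _ i]) (simp add: diff_divide_distrib)
next
  case (Suc j)
  define T where "T k = (\<Sum>l=k+1..n. V (Suc j) l)" for k
  define E where "E k = e (real n - real k + 1)" for k
  have station: "1 \<le> Suc j" "Suc j \<le> J" using Suc.prems by auto
  have "i \<le> n" using Suc.prems by simp
  obtain k0 where k0: "k0 \<le> i" "dep U V (Suc j) i + T i \<le> dep U V j k0 + T (k0 - 1)"
    using dep_busy_period[OF Suc.prems(2)] unfolding T_def by blast
  obtain k where k: "k \<le> k0" "dep U V j k0 - arrival U n \<le>
      (real k0 - real k + real j) * r - (real n - real k) / lam + (2 * real j + 1) * E k"
    using Suc.IH[of k0] Suc.prems k0(1) unfolding E_def by auto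
  have "real n - real (k0 - 1) \<le> real n - real k + 1" "real n - real i \<le> real n - real k + 1"
    using k(1) k0(1) by (cases k0; simp)+
  then have errors: "e (real n - real (k0 - 1)) \<le> E k" "e (real n - real i) \<le> E k"
    unfolding E_def using monoD[OF e_mono] by auto
  have work_upper: "T (k0 - 1) \<le> (real n - real (k0 - 1)) / mu (Suc j) + E k"
    using srv[of "k0 - 1", OF _ station] errors(1) \<open>k0 \<le> i\<close> \<open>i \<le> n\<close>
    unfolding T_def by (simp add: abs_le_iff le_diff_conv)
  have work_lower: "(real n - real i) / mu (Suc j) - E k \<le> T i"
    using srv[OF \<open>i \<le> n\<close> station] errors(2)
    unfolding T_def by (simp add: abs_le_iff)
  have "(real n - real (k0 - 1)) / mu (Suc j) - (real n - real i) / mu (Suc j)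
      = (real i - real (k0 - 1)) * (1 / mu (Suc j))" by (simp add: diff_divide_distrib)
  also have "\<dots> \<le> (real i - real (k0 - 1)) * r"
    using mean[OF station] k0(1) by (intro mult_left_mono) auto
  also have "\<dots> \<le> (real i - real k0 + 1) * r"
    using r by (intro mult_right_mono) auto
  finally have mean_work: "(real n - real (k0 - 1)) / mu (Suc j) - (real n - real i) / mu (Suc j)
      \<le> (real i - real k0 + 1) * r" .
  have "dep U V (Suc j) i - arrival U n \<le>
     (real i - real k + real (Suc j)) * r - (real n - real k) / lam + (2 * real (Suc j) + 1) * E k"
    using k0(2) k(2) work_upper work_lower mean_work by (simp add: algebra_simps)
  then show ?case using k(1) k0(1) unfolding E_def by (intro exI[of _ k]) simp
qed

section \<open>Absorbing the error term into the drift\<close>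

text \<open>Young's inequality in the form used for sqrt (x ln ln x): with s^2 = x L,
  b s \<le> a x + b^2 L / (4a).\<close>
lemma young_inequality:
  fixes a b s L :: real
  assumes "0 < a" "0 < L"
  shows "b * s \<le> a * s^2 / L + b^2 * L / (4 * a)"
proof -
  have "a * s^2 / L + b^2 * L / (4 * a) - b * s = (2 * a * s - b * L)^2 / (4 * a * L)"
    using assms by (simp add: field_simps power2_eq_square)
  also have "\<dots> \<ge> 0" using assms by simp
  finally show ?thesis by simp
qed

lemma lnln_dominated:
  fixes K x :: real
  assumes K: "exp 4 \<le> K" and x: "0 < x" and large: "(ln K)^3 \<le> ln x"
  shows "9 * K^2 * ln (ln x) \<le> x"
proof -
  have K0: "0 < K" using less_le_trans[OF exp_gt_zero K] .
  have lnK: "4 \<le> ln K" using K K0 by (simp add: ln_ge_iff)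
  have K2: "2 \<le> K" using K exp_ge_add_one_self[of 4] by linarith
  have "16 * ln K \<le> (ln K)^2 * ln K"
    using lnK power_mono[of 4 "ln K" 2] by (intro mult_right_mono) auto
  then have "ln (K^16) \<le> ln x" using large K0 by (simp add: ln_realpow power3_eq_cube power2_eq_square)
  then have "(K^8)^2 \<le> x" using K0 x by (simp flip: power_mult)
  then have Kq: "K^8 \<le> sqrt x" by (rule real_le_rsqrt)
  have "2^6 \<le> K^6" using K2 by (intro power_mono) auto
  then have "K^2 * 18 \<le> K^2 * K^6" using K0 by (intro mult_left_mono) auto
  then have q: "18 * K^2 \<le> sqrt x" using Kq by (simp flip: power_add)
  have lnx: "0 < ln x" using large lnK by (smt (verit) zero_less_power)
  have "ln (ln x) \<le> ln x" using lnx by (rule ln_bound)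
  also have "\<dots> = 2 * ln (sqrt x)" using x by (simp add: ln_sqrt)
  also have "\<dots> \<le> 2 * sqrt x" using x by (simp add: ln_bound)
  finally have "9 * K^2 * ln (ln x) \<le> (18 * K^2) * sqrt x" using K0 by simp
  also have "\<dots> \<le> sqrt x * sqrt x" using q x by (intro mult_right_mono) auto
  finally show ?thesis using x by simp
qed

lemma phi_absorbed:
  fixes a b x :: real
  assumes a: "0 < a" and b: "0 < b" and K: "exp (2 * exp 1) \<le> b / a" and x: "0 \<le> x"
  shows "3 * b * phi x \<le> a * x + 7 * b * (b / a) * ln (ln (b / a))"
proof -
  define K where "K = b / a"
  define LL where "LL = ln (ln K)"
  have e2: "2 \<le> exp (1::real)" using exp_ge_add_one_self[of 1] by simp
  have "exp (exp 1) \<le> K" using K e2 unfolding K_def by (smt (verit) exp_le_cancel_iff)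
  then have LL1: "1 \<le> LL" and lnK: "exp 1 \<le> ln K" unfolding LL_def using ln_ge_e by auto
  have K1: "1 \<le> K" using \<open>exp (exp 1) \<le> K\<close> exp_ge_add_one_self[of "exp 1"] e2 by linarith
  have bKLL: "b \<le> b * K * LL" using b K1 LL1 mult_mono[OF K1 LL1] by simp
  have ax: "0 \<le> a * x" using a x by simp
  have const0: "0 \<le> 7 * b * K * LL" using b K1 LL1 by simp
  have "3 * b * phi x \<le> a * x + 7 * b * K * LL"
  proof (cases "exp (exp 1) \<le> x")
    case False
    then have "3 * b * phi x = 3 * b" by (simp add: phi_def)
    also have "\<dots> \<le> 7 * (b * K * LL)" using bKLL b by linarith
    finally show ?thesis using ax by (simp add: mult.assoc)
  next
    case True
    define L where "L = ln (ln x)"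
    define s where "s = sqrt (x * L)"
    have L1: "1 \<le> L" unfolding L_def using ln_ge_e(2)[OF True] .
    have s2: "s^2 = x * L" unfolding s_def using x L1 by simp
    have phi_s: "phi x = s" using True by (simp add: phi_def s_def L_def)
    show ?thesis
    proof (cases "L \<le> 3 * LL")
      case True
      have "3 * b * s \<le> a * s^2 / L + (3 * b)^2 * L / (4 * a)"
        using young_inequality[OF a, of L "3 * b" s] L1 by simp
      also have "\<dots> = a * x + 9 / 4 * b * K * L"
        using a L1 s2 unfolding K_def by (simp add: field_simps power2_eq_square)
      also have "\<dots> \<le> a * x + 7 * b * K * LL"
        using True b K1 L1 by (simp add: mult_left_mono)
      finally show ?thesis using phi_s by simp
    next
      case False
      have lnK0: "0 < ln K" and lnx0: "0 < ln x"
        using lnK ln_ge_e(1)[OF True] exp_gt_zero less_le_trans by blast+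
      have "ln ((ln K)^3) < ln (ln x)" using False lnK0 by (simp add: ln_realpow LL_def L_def)
      then have "(ln K)^3 \<le> ln x" using lnK0 lnx0 by simp
      moreover have "exp 4 \<le> K" using K e2 unfolding K_def by (smt (verit) exp_le_cancel_iff)
      ultimately have dom: "9 * K^2 * L \<le> x"
        unfolding L_def using lnln_dominated True x by (smt (verit) exp_gt_zero)
      have "(3 * b * s)^2 = a^2 * x * (9 * K^2 * L)"
        using a s2 unfolding K_def by (simp add: field_simps power2_eq_square)
      also have "\<dots> \<le> a^2 * x * x" using dom a x by (intro mult_left_mono) auto
      finally have "(3 * b * s)^2 \<le> (a * x)^2" by (simp add: power2_eq_square mult_ac)
      then have "3 * b * s \<le> a * x" using ax by (rule power2_le_imp_le)
      then show ?thesis unfolding phi_s using const0 by linarith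
    qed
  qed
  then show ?thesis unfolding K_def LL_def by simp
qed

text \<open>The conclusion is phrased with real subtraction, as needed by dep_path_bound.\<close>
lemma tail_deviation_extend:
  fixes f :: "nat \<Rightarrow> real"
  assumes dev: "\<And>k. k < n \<Longrightarrow>
      \<bar>(\<Sum>i=k+1..n. f i) - real (n - k) / m\<bar> \<le> \<Gamma> * phi (real (n - k))"
    and "0 \<le> \<Gamma>" "\<Gamma> \<le> G" "k \<le> n"
  shows "\<bar>(\<Sum>i=k+1..n. f i) - (real n - real k) / m\<bar> \<le> G * phi (real n - real k)"
proof (cases "k < n")
  case True
  have "\<Gamma> * phi (real n - real k) \<le> G * phi (real n - real k)"
    using assms(3) phi_ge_one[of "real n - real k"] by (intro mult_right_mono) auto
  then show ?thesis using dev[OF True] True by simp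
next
  case False
  then show ?thesis using assms phi_ge_one[of 0] by simp
qed

text \<open>The sojourn-time bound in terms of a common deviation constant G and an upper
  bound r on all mean service times with lam r < 1: the path bound with error
  function G phi, whose error term is then absorbed by the drift 1/lam - r.\<close>
lemma sojourn_bound:
  fixes U :: "nat \<Rightarrow> real" and V :: "nat \<Rightarrow> nat \<Rightarrow> real" and mu :: "nat \<Rightarrow> real"
  assumes J: "1 \<le> J" and lam: "0 < lam" and r: "0 \<le> r" "lam * r < 1"
    and mean: "\<And>j. 1 \<le> j \<Longrightarrow> j \<le> J \<Longrightarrow> 1 / mu j \<le> r"
    and big: "exp (2 * exp 1) \<le> lam * G"
    and arr: "\<And>k. k \<le> n \<Longrightarrow>
      (real n - real k) / lam - G * phi (real n - real k) \<le> (\<Sum>i=k+1..n. U i)"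
    and srv: "\<And>k j. k \<le> n \<Longrightarrow> 1 \<le> j \<Longrightarrow> j \<le> J \<Longrightarrow>
      \<bar>(\<Sum>i=k+1..n. V j i) - (real n - real k) / mu j\<bar> \<le> G * phi (real n - real k)"
  shows "sojourn U V J n \<le> 7 * J^2 * G^2 * lam / (1 - lam * r)
           * ln (ln (J * lam * G / (1 - lam * r))) + J / lam"
proof -
  define del where "del = 1 - lam * r"
  have del: "0 < del" "del \<le> 1" using r lam by (auto simp: del_def)
  have "0 < lam * G" using big exp_gt_zero[of "2 * exp 1"] by linarith
  then have G0: "0 < G" using lam by (simp add: zero_less_mult_iff)
  have e_mono: "mono (\<lambda>x. G * phi x)" using G0 monoD[OF phi_mono] by (auto intro!: monoI mult_left_mono)
  obtain k where k: "k \<le> n" "sojourn U V J n \<le> (real n - real k + real J) * r - (real n - real k) / lam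
      + (2 * real J + 1) * (G * phi (real n - real k + 1))"
    using dep_path_bound[where V = V and J = J, OF e_mono r(1) mean arr srv order_refl order_refl]
    unfolding sojourn_def by auto
  define m where "m = real n - real k"
  define R where "R = 7 * (real J * G) * (real J * G / (del / lam)) * ln (ln (real J * G / (del / lam)))"
  have "lam * G \<le> real J * G / (del / lam)" using J del lam G0 by (simp add: field_simps mult_mono)
  then have "3 * (real J * G) * phi (m + 1) \<le> del / lam * (m + 1) + R"
    unfolding R_def using big phi_absorbed[of "del / lam" "real J * G" "m + 1"] J del lam G0 k(1)
    unfolding m_def by simp
  moreover have "(2 * real J + 1) * (G * phi (m + 1)) \<le> 3 * (real J * G) * phi (m + 1)"
    using J G0 phi_ge_one[of "m + 1"] by (simp add: mult_right_mono)
  moreover have "(real J - 1) * r \<le> (real J - 1) * (1 / lam)"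
    using J r lam by (intro mult_left_mono) (auto simp: field_simps)
  moreover have "del / lam = 1 / lam - r" using lam by (simp add: del_def field_simps)
  ultimately have "sojourn U V J n \<le> R + real J / lam"
    using k(2) unfolding m_def[symmetric] by (simp add: algebra_simps add_divide_distrib)
  then show ?thesis unfolding R_def del_def using lam del
    by (simp add: field_simps power2_eq_square)
qed

theorem theorem1:
  fixes U :: "nat \<Rightarrow> real" and V :: "nat \<Rightarrow> nat \<Rightarrow> real"
    and J n :: nat and lambda Ga :: real and mu Gs :: "nat \<Rightarrow> real"
  assumes J: "J \<ge> 1" and n: "n \<ge> 1"
    and U_nonneg: "\<And>l. 1 \<le> l \<Longrightarrow> l \<le> n \<Longrightarrow> U l \<ge> 0"
    and V_nonneg: "\<And>j i. 1 \<le> j \<Longrightarrow> j \<le> J \<Longrightarrow> 1 \<le> i \<Longrightarrow> i \<le> n \<Longrightarrow> V j i \<ge> 0"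
    and lam: "lambda > 0"
    and mu: "\<And>j. 1 \<le> j \<Longrightarrow> j \<le> J \<Longrightarrow> mu j > 0"
    and Ga: "Ga \<ge> 0"
    and Gs: "\<And>j. 1 \<le> j \<Longrightarrow> j \<le> J \<Longrightarrow> Gs j \<ge> 0"
    and arr: "\<And>k. k < n \<Longrightarrow>
       \<bar>(\<Sum>i=k+1..n. U i) - (n - k) / lambda\<bar> \<le> Ga * phi (real (n - k))"
    and srv: "\<And>k j. k < n \<Longrightarrow> 1 \<le> j \<Longrightarrow> j \<le> J \<Longrightarrow>
       \<bar>(\<Sum>i=k+1..n. V j i) - (n - k) / mu j\<bar> \<le> Gs j * phi (real (n - k))"
    and big: "lambda * max Ga (Max (Gs ` {1..J})) \<ge> exp (2 * exp 1)"
    and rho: "lambda / Min (mu ` {1..J}) < 1"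
  shows "sojourn U V J n \<le>
     (let G = max Ga (Max (Gs ` {1..J})); r = lambda / Min (mu ` {1..J}) in
       7 * J^2 * G^2 * lambda / (1 - r) * ln (ln (J * lambda * G / (1 - r))) + J / lambda)"
proof -
  define G where "G = max Ga (Max (Gs ` {1..J}))"
  define Mn where "Mn = Min (mu ` {1..J})"
  have G_ge: "Ga \<le> G" "\<And>j. 1 \<le> j \<Longrightarrow> j \<le> J \<Longrightarrow> Gs j \<le> G"
    unfolding G_def by (auto intro: max.coboundedI2)
  have Mn: "Mn \<in> mu ` {1..J}" "\<And>j. 1 \<le> j \<Longrightarrow> j \<le> J \<Longrightarrow> Mn \<le> mu j"
    unfolding Mn_def using J by auto
  have Mn0: "0 < Mn" using Mn(1) mu by auto
  have mean: "1 / mu j \<le> 1 / Mn" if "1 \<le> j" "j \<le> J" for j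
    using Mn(2)[OF that] Mn0 by (intro divide_left_mono) auto
  have arr_dev: "(real n - real k) / lambda - G * phi (real n - real k) \<le> (\<Sum>i=k+1..n. U i)"
    if "k \<le> n" for k
    using tail_deviation_extend[OF arr Ga G_ge(1) that] by (simp add: abs_le_iff)
  have srv_dev: "\<bar>(\<Sum>i=k+1..n. V j i) - (real n - real k) / mu j\<bar> \<le> G * phi (real n - real k)"
    if "k \<le> n" "1 \<le> j" "j \<le> J" for k j
    using tail_deviation_extend[OF srv[OF _ that(2,3)] Gs[OF that(2,3)] G_ge(2)[OF that(2,3)] that(1)] .
  have "sojourn U V J n \<le> 7 * J^2 * G^2 * lambda / (1 - lambda * (1 / Mn))
           * ln (ln (J * lambda * G / (1 - lambda * (1 / Mn)))) + J / lambda"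
    using sojourn_bound[where V = V and J = J, OF J lam _ _ mean _ arr_dev srv_dev] Mn0 rho big
    unfolding G_def[symmetric] Mn_def[symmetric] by simp
  then show ?thesis unfolding Let_def G_def[symmetric] Mn_def[symmetric] by simp
qed

end
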